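(* Let $(\Omega,\mathcal{F},\mathbb{P})$ be a probability space and let $\mathcal{A}\subset L^0_+$ be convex and solid. Then $\mathcal{A}$ is tight if and only if $\mathcal{A}$ is radially bounded.
   Context: $L^0$ denotes the space of real-valued measurable functions on $\Omega$ modulo $\mathbb{P}$-a.s. equality, ordered by $X\ge Y$ iff $\mathbb{P}(X\ge Y)=1$; $L^0_+=\{X\in L^0: X\ge 0\}$. A set $\mathcal{A}\subset L^0$ is solid if $X\in\mathcal{A}$ and $|Y|\le|X|$ imply $Y\in\mathcal{A}$. A set $\mathcal{A}$ is radially bounded if for every $X\in\mathcal{A}\setminus\{0\}$ there exists $\lambda_X\in(0,\infty)$ such that $\lambda X\notin\mathcal{A}$ for all $\lambda\in(\lambda_X,\infty)$. A set $\mathcal{A}$ is tight (bounded in probability) if for every $\varepsilon>0$ there exists $M>0$ with $\sup_{X\in\mathcal{A}}\mathbb{P}(|X|>M)<\varepsilon$. *)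

theory Defs
  imports "HOL-Probability.Probability"
begin

text \<open>Elements of L^0 are represented by real-valued measurable functions; all
  order relations are understood almost surely.  Sets of random variables
  considered below are closed under a.s. equality by solidity.\<close>

definition L0_pos :: "'a measure \<Rightarrow> ('a \<Rightarrow> real) set" where
  "L0_pos M = {X \<in> borel_measurable M. AE \<omega> in M. 0 \<le> X \<omega>}"

definition convex_L0 :: "('a \<Rightarrow> real) set \<Rightarrow> bool" where
  "convex_L0 A \<longleftrightarrow> (\<forall>X\<in>A. \<forall>Y\<in>A. \<forall>t::real. 0 \<le> t \<and> t \<le> 1 \<longrightarrow>
       (\<lambda>\<omega>. t * X \<omega> + (1 - t) * Y \<omega>) \<in> A)"

definition solid_pos :: "'a measure \<Rightarrow> ('a \<Rightarrow> real) set \<Rightarrow> bool" where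
  "solid_pos M A \<longleftrightarrow> (\<forall>X\<in>A. \<forall>Y\<in>L0_pos M.
       (AE \<omega> in M. \<bar>Y \<omega>\<bar> \<le> \<bar>X \<omega>\<bar>) \<longrightarrow> Y \<in> A)"

definition radially_bounded :: "'a measure \<Rightarrow> ('a \<Rightarrow> real) set \<Rightarrow> bool" where
  "radially_bounded M A \<longleftrightarrow> (\<forall>X\<in>A. \<not> (AE \<omega> in M. X \<omega> = 0) \<longrightarrow>
       (\<exists>l::real. 0 < l \<and> (\<forall>c::real. l < c \<longrightarrow> (\<lambda>\<omega>. c * X \<omega>) \<notin> A)))"

definition tight_L0 :: "'a measure \<Rightarrow> ('a \<Rightarrow> real) set \<Rightarrow> bool" where
  "tight_L0 M A \<longleftrightarrow> (\<forall>\<epsilon>::real. 0 < \<epsilon> \<longrightarrow> (\<exists>C::real. 0 < C \<and>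
       (\<forall>X\<in>A. measure M {\<omega> \<in> space M. \<bar>X \<omega>\<bar> > C} < \<epsilon>)))"

end

theory Submission
  imports Defs
begin

text \<open>If \<open>X \<noteq> 0\<close> lies in a tight set, then \<open>P(\<bar>X\<bar> > \<delta>) > 0\<close> for some \<open>\<delta> > 0\<close>, and
  tightness bounds \<open>P(\<bar>cX\<bar> > C)\<close> below this probability, which forces \<open>c \<le> C/\<delta>\<close>.
  Conversely, if \<open>A\<close> is not tight, pick \<open>X\<^sub>k \<in> A\<close> with \<open>P(X\<^sub>k > 2\<^sup>k\<^sup>+\<^sup>1) \<ge> \<epsilon>\<close> and let
  \<open>B\<^sub>k\<close> be these events. Solidity puts \<open>2\<^sup>k\<^sup>+\<^sup>1 1\<^sub>B\<^sub>k\<close> into \<open>A\<close>, and halving-and-averaging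
  (convexity) then gives \<open>2\<^sup>j 1\<^sub>E \<in> A\<close> for every finite union \<open>E\<close> of the \<open>B\<^sub>k\<close> with
  \<open>k \<ge> j\<close>. The limsup of the \<open>B\<^sub>k\<close> has probability at least \<open>\<epsilon>\<close>; truncating the tail
  unions with geometrically small losses yields an event \<open>D\<close> of positive probability
  contained in such a finite union for every \<open>j\<close>, so all multiples of \<open>1\<^sub>D\<close> lie in
  \<open>A\<close> and \<open>A\<close> is not radially bounded.\<close>

lemma (in finite_measure) measure_abs_gt_pos_if_not_AE_zero:
  assumes X: "X \<in> borel_measurable M" and nonzero: "\<not> (AE \<omega> in M. X \<omega> = 0)"
  obtains \<delta> :: real where "0 < \<delta>" "0 < measure M {\<omega> \<in> space M. \<delta> < \<bar>X \<omega>\<bar>}"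
proof -
  define S where "S n = {\<omega> \<in> space M. inverse (real (Suc n)) < \<bar>X \<omega>\<bar>}" for n
  have S_sets: "S n \<in> sets M" for n
    unfolding S_def using X by measurable
  have "\<exists>n. 0 < measure M (S n)"
  proof (rule ccontr)
    assume "\<nexists>n. 0 < measure M (S n)"
    then have "S n \<in> null_sets M" for n
      using S_sets measure_le_0_iff[of M "S n"] by (auto simp: not_less emeasure_eq_measure)
    then have "(\<Union>n. S n) \<in> null_sets M" by blast
    moreover have "{\<omega> \<in> space M. X \<omega> \<noteq> 0} \<subseteq> (\<Union>n. S n)"
      unfolding S_def using reals_Archimedean[of "\<bar>X _\<bar>"] by auto
    ultimately have "AE \<omega> in M. X \<omega> = 0" by (rule AE_I')
    with nonzero show False ..
  qed
  then obtain n where "0 < measure M (S n)" ..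
  then show thesis using that[of "inverse (real (Suc n))"] unfolding S_def by simp
qed

lemma tight_imp_radially_bounded:
  assumes "finite_measure M" and A: "A \<subseteq> borel_measurable M" and tight: "tight_L0 M A"
  shows "radially_bounded M A"
  unfolding radially_bounded_def
proof (intro ballI impI)
  interpret finite_measure M by fact
  fix X assume "X \<in> A" and nonzero: "\<not> (AE \<omega> in M. X \<omega> = 0)"
  then have X: "X \<in> borel_measurable M" using A by auto
  obtain \<delta> where \<delta>: "0 < \<delta>" "0 < measure M {\<omega> \<in> space M. \<delta> < \<bar>X \<omega>\<bar>}"
    using measure_abs_gt_pos_if_not_AE_zero[OF X nonzero] .
  obtain C where C: "0 < C"
    "\<And>Y. Y \<in> A \<Longrightarrow> measure M {\<omega> \<in> space M. C < \<bar>Y \<omega>\<bar>} < measure M {\<omega> \<in> space M. \<delta> < \<bar>X \<omega>\<bar>}"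
    using tight[unfolded tight_L0_def, rule_format, OF \<delta>(2)] by blast
  show "\<exists>l. 0 < l \<and> (\<forall>c. l < c \<longrightarrow> (\<lambda>\<omega>. c * X \<omega>) \<notin> A)"
  proof (intro exI conjI allI impI notI)
    show "0 < C / \<delta>" using C \<delta> by simp
    fix c assume c: "C / \<delta> < c" and cX: "(\<lambda>\<omega>. c * X \<omega>) \<in> A"
    have "0 < c" using C \<delta> c by (meson divide_pos_pos less_trans)
    have "C < c * \<delta>" using c \<delta>(1) by (simp add: pos_divide_less_eq)
    have "{\<omega> \<in> space M. \<delta> < \<bar>X \<omega>\<bar>} \<subseteq> {\<omega> \<in> space M. C < \<bar>c * X \<omega>\<bar>}"
    proof safe
      fix \<omega> assume "\<delta> < \<bar>X \<omega>\<bar>"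
      then have "c * \<delta> < c * \<bar>X \<omega>\<bar>" using \<open>0 < c\<close> by (rule mult_strict_left_mono)
      moreover have "\<bar>c * X \<omega>\<bar> = c * \<bar>X \<omega>\<bar>" using \<open>0 < c\<close> by (simp add: abs_mult)
      ultimately show "C < \<bar>c * X \<omega>\<bar>" using \<open>C < c * \<delta>\<close> by linarith
    qed
    then have "measure M {\<omega> \<in> space M. \<delta> < \<bar>X \<omega>\<bar>} \<le> measure M {\<omega> \<in> space M. C < \<bar>c * X \<omega>\<bar>}"
      by (rule finite_measure_mono) (use X in measurable)
    with C(2)[OF cX] show False by simp
  qed
qed

lemma (in finite_measure) measure_UN_diff_finite_UN_less:
  fixes C :: "nat \<Rightarrow> 'a set"
  assumes C: "range C \<subseteq> sets M" and "0 < d"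
  shows "\<exists>n. measure M ((\<Union>k. C k) - (\<Union>k<n. C k)) < d"
proof -
  have "(\<lambda>n. measure M (\<Union>k<n. C k)) \<longlonglongrightarrow> measure M (\<Union>n. \<Union>k<n. C k)"
    using C by (intro finite_Lim_measure_incseq incseq_SucI) (auto simp: lessThan_Suc)
  also have "(\<Union>n. \<Union>k<n. C k) = (\<Union>k. C k)" by blast
  finally obtain n where "\<bar>measure M (\<Union>k<n. C k) - measure M (\<Union>k. C k)\<bar> < d"
    using LIMSEQ_D \<open>0 < d\<close> by fastforce
  moreover have "measure M ((\<Union>k. C k) - (\<Union>k<n. C k)) = measure M (\<Union>k. C k) - measure M (\<Union>k<n. C k)"
    using C by (intro finite_measure_Diff) auto
  ultimately show ?thesis by (intro exI[of _ n]) arith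
qed

lemma (in finite_measure) exists_finite_tail_unions_measure_ge:
  fixes B :: "nat \<Rightarrow> 'a set"
  assumes B: "range B \<subseteq> sets M" and "0 < d"
  obtains N where "measure M (\<Inter>j. \<Union>k. B (j + k)) - d \<le> measure M (\<Inter>j. \<Union>k<N j. B (j + k))"
proof -
  define loss where "loss j = d * (1/2) ^ Suc j" for j
  have loss_sums: "loss sums d"
    using sums_mult[OF power_half_series, of d] unfolding loss_def by simp
  have "\<exists>n. measure M ((\<Union>k. B (j + k)) - (\<Union>k<n. B (j + k))) < loss j" for j
    using B \<open>0 < d\<close> by (intro measure_UN_diff_finite_UN_less) (auto simp: loss_def)
  then obtain N where N: "\<And>j. measure M ((\<Union>k. B (j + k)) - (\<Union>k<N j. B (j + k))) < loss j"
    by metis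
  define G where "G = (\<Inter>j. \<Union>k. B (j + k))"
  define D where "D = (\<Inter>j. \<Union>k<N j. B (j + k))"
  define R where "R j = (\<Union>k. B (j + k)) - (\<Union>k<N j. B (j + k))" for j
  have R_sets: "range R \<subseteq> sets M" unfolding R_def using B by auto
  have R_le: "measure M (R j) \<le> loss j" for j
    using N[of j] unfolding R_def by simp
  have loss_summable: "summable loss" using loss_sums by (rule sums_summable)
  have R_summable: "summable (\<lambda>j. measure M (R j))"
    by (rule summable_comparison_test'[OF loss_summable, of 0]) (simp add: R_le)
  have "G - D \<subseteq> (\<Union>j. R j)" unfolding G_def D_def R_def by blast
  then have "measure M (G - D) \<le> measure M (\<Union>j. R j)"
    using R_sets by (intro finite_measure_mono) auto
  also have "\<dots> \<le> (\<Sum>j. measure M (R j))"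
    using R_sets R_summable by (rule finite_measure_subadditive_countably)
  also have "\<dots> \<le> (\<Sum>j. loss j)"
    by (rule suminf_le[OF R_le R_summable loss_summable])
  also have "\<dots> = d" using loss_sums by (simp add: sums_iff)
  finally have "measure M (G - D) \<le> d" .
  moreover have "D \<subseteq> G" unfolding D_def G_def by blast
  then have "measure M (G - D) = measure M G - measure M D"
    using B by (intro finite_measure_Diff) (auto simp: G_def D_def)
  ultimately have "measure M G - d \<le> measure M D" by simp
  then show thesis unfolding G_def D_def by (rule that)
qed

lemma (in finite_measure) measure_Inter_tail_unions_ge:
  fixes B :: "nat \<Rightarrow> 'a set"
  assumes B: "range B \<subseteq> sets M" and e: "\<And>k. e \<le> measure M (B k)"
  shows "e \<le> measure M (\<Inter>j. \<Union>k. B (j + k))"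
proof (rule LIMSEQ_le_const)
  have "decseq (\<lambda>j. \<Union>k. B (j + k))"
    unfolding decseq_def by (auto dest!: le_Suc_ex) (metis add.assoc)
  then show "(\<lambda>j. measure M (\<Union>k. B (j + k))) \<longlonglongrightarrow> measure M (\<Inter>j. \<Union>k. B (j + k))"
    using B by (intro finite_Lim_measure_decseq) auto
  have "measure M (B j) \<le> measure M (\<Union>k. B (j + k))" for j
    using B UN_upper[of 0 UNIV "\<lambda>k. B (j + k)"] by (intro finite_measure_mono) auto
  then show "\<exists>N. \<forall>j\<ge>N. e \<le> measure M (\<Union>k. B (j + k))"
    using e order_trans by blast
qed

lemma solid_pos_memI:
  assumes "solid_pos M A" "X \<in> A" "Y \<in> borel_measurable M"
    and "\<And>\<omega>. \<omega> \<in> space M \<Longrightarrow> 0 \<le> Y \<omega>" "\<And>\<omega>. \<omega> \<in> space M \<Longrightarrow> Y \<omega> \<le> \<bar>X \<omega>\<bar>"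
  shows "Y \<in> A"
  using assms unfolding solid_pos_def L0_pos_def by (auto intro!: AE_I2)

lemma convex_solid_dyadic_indicator_UN_mem:
  assumes convex: "convex_L0 A" and solid: "solid_pos M A" and B: "range B \<subseteq> sets M"
    and levels: "\<And>k. (\<lambda>\<omega>. 2 ^ Suc k * indicator (B k) \<omega>) \<in> A"
  shows "(\<lambda>\<omega>. 2 ^ j * indicator (\<Union>k<n. B (j + k)) \<omega>) \<in> A"
proof (induction n arbitrary: j)
  case 0
  show ?case by (rule solid_pos_memI[OF solid levels[of 0]]) auto
next
  case (Suc n)
  let ?E = "\<Union>k<n. B (Suc j + k)"
  have mid: "(\<lambda>\<omega>. 1/2 * (2 ^ Suc j * indicator (B j) \<omega>) + (1 - 1/2) * (2 ^ Suc j * indicator ?E \<omega>)) \<in> A"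
    using convex[unfolded convex_L0_def, rule_format, OF levels[of j] Suc.IH[of "Suc j"], of "1/2"]
    by simp
  have split: "(\<Union>k<Suc n. B (j + k)) = B j \<union> ?E"
    by (auto simp: lessThan_Suc_eq_insert_0)
  have "(\<Union>k<Suc n. B (j + k)) \<in> sets M" using B by auto
  then have "(\<lambda>\<omega>. (2::real) ^ j * indicator (\<Union>k<Suc n. B (j + k)) \<omega>) \<in> borel_measurable M"
    by measurable
  then show ?case
    by (rule solid_pos_memI[OF solid mid]) (auto simp: split indicator_def)
qed

lemma not_tight_imp_indicator_ray:
  assumes "finite_measure M" and A: "A \<subseteq> borel_measurable M"
    and convex: "convex_L0 A" and solid: "solid_pos M A" and not_tight: "\<not> tight_L0 M A"
  obtains D where "D \<in> sets M" "0 < measure M D" "\<And>c. 0 \<le> c \<Longrightarrow> (\<lambda>\<omega>. c * indicator D \<omega>) \<in> A"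
proof -
  interpret finite_measure M by fact
  obtain \<epsilon> :: real where "0 < \<epsilon>"
    and large: "\<And>C. 0 < C \<Longrightarrow> \<exists>X\<in>A. \<epsilon> \<le> measure M {\<omega> \<in> space M. C < \<bar>X \<omega>\<bar>}"
    using not_tight unfolding tight_L0_def by (metis not_less)
  have "\<forall>k::nat. \<exists>X\<in>A. \<epsilon> \<le> measure M {\<omega> \<in> space M. 2 ^ Suc k < \<bar>X \<omega>\<bar>}"
    using large by simp
  then obtain Xs where Xs: "\<And>k. Xs k \<in> A"
    and Xs_large: "\<And>k. \<epsilon> \<le> measure M {\<omega> \<in> space M. 2 ^ Suc k < \<bar>Xs k \<omega>\<bar>}"
    by metis
  define B where "B k = {\<omega> \<in> space M. 2 ^ Suc k < \<bar>Xs k \<omega>\<bar>}" for k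
  have "Xs k \<in> borel_measurable M" for k using Xs A by auto
  then have B_sets: "B k \<in> sets M" for k unfolding B_def by measurable
  then have B: "range B \<subseteq> sets M" by auto
  have levels: "(\<lambda>\<omega>. 2 ^ Suc k * indicator (B k) \<omega>) \<in> A" for k
  proof (rule solid_pos_memI[OF solid Xs[of k]])
    show "(\<lambda>\<omega>. (2::real) ^ Suc k * indicator (B k) \<omega>) \<in> borel_measurable M"
      using B_sets[of k] by measurable
  qed (auto simp: B_def indicator_def)
  have "\<epsilon> \<le> measure M (\<Inter>j. \<Union>k. B (j + k))"
    using B by (rule measure_Inter_tail_unions_ge) (use Xs_large in \<open>simp add: B_def\<close>)
  moreover obtain N where
    "measure M (\<Inter>j. \<Union>k. B (j + k)) - \<epsilon> / 2 \<le> measure M (\<Inter>j. \<Union>k<N j. B (j + k))"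
    using exists_finite_tail_unions_measure_ge[OF B, of "\<epsilon> / 2"] \<open>0 < \<epsilon>\<close> by auto
  moreover define D where "D = (\<Inter>j. \<Union>k<N j. B (j + k))"
  ultimately have "0 < measure M D" using \<open>0 < \<epsilon>\<close> by simp
  moreover have D_sets: "D \<in> sets M" unfolding D_def using B by auto
  moreover have "(\<lambda>\<omega>. c * indicator D \<omega>) \<in> A" if "0 \<le> c" for c :: real
  proof -
    obtain j :: nat where "c < 2 ^ j" using real_arch_pow[of 2 c] by auto
    show ?thesis
    proof (rule solid_pos_memI[OF solid convex_solid_dyadic_indicator_UN_mem[OF convex solid B levels, of j "N j"]])
      show "(\<lambda>\<omega>. c * indicator D \<omega>) \<in> borel_measurable M" using D_sets by measurable
    qed (use \<open>0 \<le> c\<close> \<open>c < 2 ^ j\<close> in \<open>auto simp: D_def indicator_def\<close>)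
  qed
  ultimately show thesis using that by blast
qed

lemma radially_bounded_imp_tight:
  assumes "finite_measure M" and "A \<subseteq> borel_measurable M" "convex_L0 A" "solid_pos M A"
    and radial: "radially_bounded M A"
  shows "tight_L0 M A"
proof (rule ccontr)
  interpret finite_measure M by fact
  assume "\<not> tight_L0 M A"
  then obtain D where D: "D \<in> sets M" "0 < measure M D"
    and ray: "\<And>c. 0 \<le> c \<Longrightarrow> (\<lambda>\<omega>. c * indicator D \<omega>) \<in> A"
    using not_tight_imp_indicator_ray assms by metis
  have "\<not> (AE \<omega> in M. indicator D \<omega> = (0::real))"
    using D AE_iff_null_sets[OF D(1)] by (auto simp: emeasure_eq_measure indicator_eq_0_iff)
  moreover have "indicator D \<in> A" using ray[of 1] by simp
  ultimately obtain l where "0 < l" "\<And>c. l < c \<Longrightarrow> (\<lambda>\<omega>. c * indicator D \<omega>) \<notin> A"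
    using radial unfolding radially_bounded_def by blast
  with ray[of "l + 1"] show False by simp
qed

theorem theorem3p4:
  fixes M :: "'a measure" and A :: "('a \<Rightarrow> real) set"
  assumes "prob_space M"
    and "A \<subseteq> L0_pos M"
    and "convex_L0 A"
    and "solid_pos M A"
  shows "tight_L0 M A \<longleftrightarrow> radially_bounded M A"
proof -
  have finite: "finite_measure M"
    using assms(1) by (rule prob_space.finite_measure)
  have "A \<subseteq> borel_measurable M" using assms(2) by (auto simp: L0_pos_def)
  then show ?thesis
    using tight_imp_radially_bounded radially_bounded_imp_tight finite assms(3,4) by blast
qed

end
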